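(* For all $p,s\in\mathbb{N}_0$ and all $x\in[0,1]$, $$1\le\frac{\prod_{i=0}^{p+s-1}(1+xi)}{\Big(\prod_{j=0}^{p-1}(1+xj)\Big)\Big(\prod_{k=0}^{s-1}(1+xk)\Big)}\le1+x\,2^{p+s}.$$
   Context: Empty products equal $1$. *)

theory Defs
  imports Complex_Main
begin

end

theory Submission
  imports Defs
begin

text \<open>Write \<open>A n = (1 + 0x)(1 + 1x)\<cdots>(1 + (n-1)x)\<close> and \<open>R p s = A (p+s) / (A p * A s)\<close>,
which is the binomial coefficient \<open>(p+s choose p)\<close> at \<open>x = 1\<close>. The lower bound holds because
\<open>A (p+s) / A p\<close> is a product of \<open>s\<close> factors \<open>1 + (p+k)x \<ge> 1 + kx\<close>. For the upper bound,
\<open>R\<close> satisfies a damped Pascal rule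
  \<open>R (p+1) (s+1) = (R p (s+1) + R (p+1) s) * (1 + (n-1)x) / (2 + (n-2)x)\<close>  with \<open>n = p+s+2\<close>,
whose damping factor is at most 1 for \<open>x \<le> 1\<close>. Inducting on \<open>n\<close> with the slightly sharper
bound \<open>1 + x (2^n - 1)\<close> closes the argument, since the damping absorbs the excess \<open>1 - x\<close>.\<close>

definition arith_prod :: "real \<Rightarrow> nat \<Rightarrow> real" where
  "arith_prod x n = (\<Prod>i<n. 1 + x * real i)"

definition arith_binom :: "real \<Rightarrow> nat \<Rightarrow> nat \<Rightarrow> real" where
  "arith_binom x p s = arith_prod x (p + s) / (arith_prod x p * arith_prod x s)"

lemma arith_prod_0 [simp]: "arith_prod x 0 = 1"
  by (simp add: arith_prod_def)

lemma arith_prod_Suc [simp]: "arith_prod x (Suc n) = arith_prod x n * (1 + x * real n)"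
  by (simp add: arith_prod_def)

lemma arith_prod_pos:
  assumes "0 \<le> x"
  shows "0 < arith_prod x n"
  unfolding arith_prod_def using assms by (intro prod_pos) (auto intro: add_pos_nonneg)

lemma arith_prod_mult_le:
  assumes "0 \<le> x"
  shows "arith_prod x p * arith_prod x s \<le> arith_prod x (p + s)"
proof (induction s)
  case 0
  then show ?case by simp
next
  case (Suc s)
  have "arith_prod x p * arith_prod x s * (1 + x * real s)
      \<le> arith_prod x (p + s) * (1 + x * real (p + s))"
    using Suc.IH assms arith_prod_pos[OF assms, of "p + s"]
    by (intro mult_mono) (auto intro: mult_left_mono)
  then show ?case by (simp add: mult.assoc)
qed

lemma arith_binom_ge_1:
  assumes "0 \<le> x"
  shows "1 \<le> arith_binom x p s"
  unfolding arith_binom_def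
  using arith_prod_mult_le[OF assms] arith_prod_pos[OF assms]
  by (simp add: le_divide_eq)

lemma arith_binom_0_left [simp]: "0 \<le> x \<Longrightarrow> arith_binom x 0 s = 1"
  using arith_prod_pos[of x s] by (simp add: arith_binom_def)

lemma arith_binom_0_right [simp]: "0 \<le> x \<Longrightarrow> arith_binom x p 0 = 1"
  using arith_prod_pos[of x p] by (simp add: arith_binom_def)

lemma arith_binom_Pascal:
  assumes "0 \<le> x"
  shows "(2 + x * real (p + s)) * arith_binom x (Suc p) (Suc s)
       = (1 + x * real (Suc (p + s))) * (arith_binom x p (Suc s) + arith_binom x (Suc p) s)"
proof -
  define u v where "u = 1 + x * real p" and "v = 1 + x * real s"
  have "0 < u" "0 < v"
    using assms by (auto simp: u_def v_def intro: add_pos_nonneg)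
  moreover have "2 + x * real (p + s) = u + v"
    by (simp add: u_def v_def algebra_simps)
  moreover have "p + Suc s = Suc (p + s)" "Suc p + s = Suc (p + s)"
    "Suc p + Suc s = Suc (Suc (p + s))"
    by simp_all
  ultimately show ?thesis
    using arith_prod_pos[OF assms, of p] arith_prod_pos[OF assms, of s]
    unfolding arith_binom_def
    by (simp only: arith_prod_Suc flip: u_def v_def) (simp add: field_simps)
qed

text \<open>The induction step of the upper bound, with \<open>N = 2^(m+1)\<close> and \<open>m + 2 = p + s\<close>.\<close>

lemma Pascal_step_bound:
  fixes x m N :: real
  assumes "0 \<le> x" "x \<le> 1" "m + 2 \<le> 2 * N"
  shows "2 * (1 + x * (N - 1)) * (1 + x * (m + 1)) \<le> (1 + x * (2 * N - 1)) * (2 + x * m)"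
proof -
  have "(1 + x * (2 * N - 1)) * (2 + x * m) - 2 * (1 + x * (N - 1)) * (1 + x * (m + 1))
      = x * (1 - x) * (2 * N - m - 2)"
    by (simp add: algebra_simps)
  also have "\<dots> \<ge> 0"
    using assms by simp
  finally show ?thesis by simp
qed

lemma arith_binom_le:
  assumes "0 \<le> x" "x \<le> 1"
  shows "arith_binom x p s \<le> 1 + x * (2 ^ (p + s) - 1)"
proof -
  have base: "1 \<le> 1 + x * (2 ^ n - 1)" for n :: nat
    using assms one_le_power[of "2::real" n] by simp
  show ?thesis
  proof (induction p arbitrary: s)
    case 0
    then show ?case using assms base[of s] by simp
  next
    case (Suc p)
    note IH_p = Suc.IH
    show ?case
    proof (induction s)
      case 0
      then show ?case using assms base[of "Suc p"] by simp
    next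
      case (Suc s)
      define m where "m = p + s"
      define B where "B = 1 + x * (2 ^ Suc m - 1)"
      have B_bounds: "arith_binom x p (Suc s) \<le> B" "arith_binom x (Suc p) s \<le> B"
        using IH_p[of "Suc s"] Suc.IH by (simp_all add: B_def m_def)
      have "real (m + 2) < real (2 ^ (m + 2))"
        by (simp only: of_nat_less_iff less_exp)
      then have exp_large: "real m + 2 \<le> 2 * 2 ^ Suc m"
        by simp
      have "(2 + x * m) * arith_binom x (Suc p) (Suc s)
          = (1 + x * (m + 1)) * (arith_binom x p (Suc s) + arith_binom x (Suc p) s)"
        using arith_binom_Pascal[OF assms(1), of p s] by (simp add: m_def add.commute)
      also have "\<dots> \<le> (1 + x * (m + 1)) * (2 * B)"
        using B_bounds assms(1) by (intro mult_left_mono) auto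
      also have "\<dots> \<le> (1 + x * (2 ^ (m + 2) - 1)) * (2 + x * m)"
        using Pascal_step_bound[OF assms exp_large] by (simp add: B_def algebra_simps)
      finally show ?case
        using assms(1) by (simp add: m_def mult.commute add_pos_nonneg mult_le_cancel_left_pos)
    qed
  qed
qed

theorem lemma4p3:
  fixes p s :: nat and x :: real
  assumes "0 \<le> x" and "x \<le> 1"
  shows "1 \<le> (\<Prod>i<p+s. 1 + x * real i) /
              ((\<Prod>j<p. 1 + x * real j) * (\<Prod>k<s. 1 + x * real k)) \<and>
         (\<Prod>i<p+s. 1 + x * real i) /
              ((\<Prod>j<p. 1 + x * real j) * (\<Prod>k<s. 1 + x * real k)) \<le> 1 + x * 2 ^ (p + s)"
proof -
  have "arith_binom x p s \<le> 1 + x * 2 ^ (p + s)"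
    using arith_binom_le[OF assms, of p s] assms(1) by (simp add: algebra_simps)
  with arith_binom_ge_1[OF assms(1)] show ?thesis
    unfolding arith_binom_def arith_prod_def by simp
qed

end
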